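(* Consider a system of $n$ equations $x_i=f_i$ ($i=1,\dots,n$) over a directed set $\mathbb D$ where all right-hand sides $f_i:(\{x_1,\dots,x_n\}\to\mathbb D)\to\mathbb D$ are monotonic, and run algorithm SRR (defined below) from an arbitrary initial mapping $\rho_0$ by calling $\mathsf{solve}(n)$. Then: (1) If $\mathbb D$ has height $h$ and $\Box=\sqcup$ is a binary upper bound operator on $\mathbb D$, then SRR terminates with a post solution after at most $n+\frac h2 n(n+1)$ evaluations of right-hand sides. (2) If $\Box=\boxdot$ (for arbitrary widening $\nabla$ and narrowing $\triangle$, and $\mathbb D$ possibly having infinite ascending chains), SRR terminates and returns a post solution.
   Context: Algorithm SRR (structured round-robin) with binary operator $\Box$, maintaining a global mapping $\rho$: the recursive procedure $\mathsf{solve}(i)$ does: if $i=0$ return; call $\mathsf{solve}(i-1)$; compute $new:=\rho[x_i]\,\Box\, f_i\,\rho$ (one evaluation of a right-hand side); if $\rho[x_i]\neq new$ then set $\rho[x_i]:=new$ and call $\mathsf{solve}(i)$. A directed set is a poset in which any two elements have an upper bound; a binary upper bound operator $\sqcup$ returns some upper bound $a\sqcup b\sqsupseteq a,b$. $\mathbb D$ has height $h$ if $h$ is the maximal length of a strictly increasing chain $d_0\sqsubset d_1\sqsubset\dots\sqsubset d_h$. Monotonic: $\rho\sqsubseteq\rho'$ pointwise implies $f\rho\sqsubseteq f\rho'$. Post solution: $\rho[x_i]\sqsupseteq f_i\rho$ for all $i$. A widening operator is a binary operator $\nabla$ on $\mathbb D$ with $a\sqsubseteq a\nabla b$ and $b\sqsubseteq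 a\nabla b$ for all $a,b$, such that there is no infinite sequence $a_0,a_1,\dots$ with $a_{i+1}=a_i\nabla b_i$ and $a_{i+1}\neq a_i$ for all $i$. A narrowing operator is a binary operator $\triangle$ such that $b\sqsubseteq a$ implies $b\sqsubseteq a\triangle b\sqsubseteq a$, and there is no infinite sequence with $b_i\sqsubseteq a_i$, $a_{i+1}=a_i\triangle b_i$, $a_{i+1}\ne a_i$ for all $i$. $a\boxdot b=a\triangle b$ if $b\sqsubseteq a$, else $a\nabla b$. *)

theory Defs
  imports Complex_Main
begin

text \<open>Variables x_1..x_n are the natural numbers 1..n; a mapping is a function
  nat => 'd (only the values at 1..n are relevant). Right-hand side f_i is f i.\<close>

definition directed_set :: "'d::order itself \<Rightarrow> bool" where
  "directed_set _ \<longleftrightarrow> (\<forall>a b :: 'd. \<exists>c. a \<le> c \<and> b \<le> c)"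

definition upper_bound_op :: "('d::order \<Rightarrow> 'd \<Rightarrow> 'd) \<Rightarrow> bool" where
  "upper_bound_op j \<longleftrightarrow> (\<forall>a b. a \<le> j a b \<and> b \<le> j a b)"

definition strict_chain :: "(nat \<Rightarrow> 'd::order) \<Rightarrow> nat \<Rightarrow> bool" where
  "strict_chain c m \<longleftrightarrow> (\<forall>i<m. c i < c (Suc i))"

definition has_height :: "'d::order itself \<Rightarrow> nat \<Rightarrow> bool" where
  "has_height _ h \<longleftrightarrow> (\<exists>c :: nat \<Rightarrow> 'd. strict_chain c h) \<and>
     (\<forall>(c :: nat \<Rightarrow> 'd) m. strict_chain c m \<longrightarrow> m \<le> h)"

definition monotonic_rhs :: "nat \<Rightarrow> ((nat \<Rightarrow> 'd::order) \<Rightarrow> 'd) \<Rightarrow> bool" where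
  "monotonic_rhs n g \<longleftrightarrow>
     (\<forall>\<rho> \<rho>'. (\<forall>j\<in>{1..n}. \<rho> j \<le> \<rho>' j) \<longrightarrow> g \<rho> \<le> g \<rho>')"

definition post_solution :: "nat \<Rightarrow> (nat \<Rightarrow> (nat \<Rightarrow> 'd::order) \<Rightarrow> 'd) \<Rightarrow> (nat \<Rightarrow> 'd) \<Rightarrow> bool" where
  "post_solution n f \<rho> \<longleftrightarrow> (\<forall>i\<in>{1..n}. f i \<rho> \<le> \<rho> i)"

definition widening :: "('d::order \<Rightarrow> 'd \<Rightarrow> 'd) \<Rightarrow> bool" where
  "widening w \<longleftrightarrow> (\<forall>a b. a \<le> w a b \<and> b \<le> w a b) \<and>
     \<not> (\<exists>(a :: nat \<Rightarrow> 'd) b. \<forall>i. a (Suc i) = w (a i) (b i) \<and> a (Suc i) \<noteq> a i)"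

definition narrowing :: "('d::order \<Rightarrow> 'd \<Rightarrow> 'd) \<Rightarrow> bool" where
  "narrowing nr \<longleftrightarrow> (\<forall>a b. b \<le> a \<longrightarrow> b \<le> nr a b \<and> nr a b \<le> a) \<and>
     \<not> (\<exists>(a :: nat \<Rightarrow> 'd) b. \<forall>i. b i \<le> a i \<and> a (Suc i) = nr (a i) (b i) \<and> a (Suc i) \<noteq> a i)"

definition boxdot :: "('d::order \<Rightarrow> 'd \<Rightarrow> 'd) \<Rightarrow> ('d \<Rightarrow> 'd \<Rightarrow> 'd) \<Rightarrow> 'd \<Rightarrow> 'd \<Rightarrow> 'd" where
  "boxdot w nr a b = (if b \<le> a then nr a b else w a b)"

text \<open>Big-step semantics of SRR: srr box f i \<rho> \<rho>' k means that the call solve(i)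
  started in global mapping \<rho> terminates with global mapping \<rho>' after exactly
  k evaluations of right-hand sides. The semantics is deterministic, so existence
  of a derivation is exactly termination of the run.\<close>

inductive srr :: "('d \<Rightarrow> 'd \<Rightarrow> 'd) \<Rightarrow> (nat \<Rightarrow> (nat \<Rightarrow> 'd) \<Rightarrow> 'd) \<Rightarrow>
    nat \<Rightarrow> (nat \<Rightarrow> 'd) \<Rightarrow> (nat \<Rightarrow> 'd) \<Rightarrow> nat \<Rightarrow> bool"
  for box f where
  zero: "srr box f 0 \<rho> \<rho> 0"
| stable: "\<lbrakk> srr box f i \<rho> \<rho>1 k1; box (\<rho>1 (Suc i)) (f (Suc i) \<rho>1) = \<rho>1 (Suc i) \<rbrakk>
     \<Longrightarrow> srr box f (Suc i) \<rho> \<rho>1 (k1 + 1)"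
| update: "\<lbrakk> srr box f i \<rho> \<rho>1 k1; box (\<rho>1 (Suc i)) (f (Suc i) \<rho>1) \<noteq> \<rho>1 (Suc i);
     srr box f (Suc i) (\<rho>1(Suc i := box (\<rho>1 (Suc i)) (f (Suc i) \<rho>1))) \<rho>2 k2 \<rbrakk>
     \<Longrightarrow> srr box f (Suc i) \<rho> \<rho>2 (k1 + 1 + k2)"

end

theory Submission
  imports Defs
begin

text \<open>Both parts rest on a descent argument for the innermost loop of solve(i+1): between
  two evaluations of f (i+1), solve(i) leaves x_(i+1) unchanged, so every non-stable
  evaluation moves x_(i+1) one step along a well-founded relation. With an upper bound
  operator this is a strict increase, which in a domain of height h can happen at most h
  times per variable; the potential \<open>\<Sum> j \<cdot> (height above \<rho> x_j)\<close> then pays for all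
  evaluations. With \<open>\<boxdot>\<close> the variable is first widened, and as soon as a narrowing step
  occurs the mapping is a post solution of x_1..x_(i+1); from a post solution, monotonicity
  keeps all later evaluations below the current values, so only narrowing steps follow.\<close>

section \<open>Heights in a poset of finite height\<close>

definition height_above :: "'d::order \<Rightarrow> nat" where
  "height_above d = (GREATEST m. \<exists>c. strict_chain c m \<and> c 0 = d)"

lemma strict_chain_le_height:
  "has_height TYPE('d::order) h \<Longrightarrow> strict_chain (c :: nat \<Rightarrow> 'd) m \<Longrightarrow> m \<le> h"
  unfolding has_height_def by blast

lemma height_above_chain:
  assumes "has_height TYPE('d::order) h"
  shows "\<exists>c. strict_chain c (height_above d) \<and> c 0 = (d::'d)"
  unfolding height_above_def
proof (rule GreatestI_nat)
  show "\<exists>c. strict_chain c 0 \<and> c 0 = d"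
    by (rule exI[of _ "\<lambda>_. d"]) (simp add: strict_chain_def)
qed (use assms strict_chain_le_height in blast)

lemma height_above_le:
  "has_height TYPE('d::order) h \<Longrightarrow> height_above (d::'d) \<le> h"
  using height_above_chain strict_chain_le_height by blast

lemma height_above_less:
  assumes H: "has_height TYPE('d::order) h" and less: "(d::'d) < d'"
  shows "height_above d' < height_above d"
proof -
  obtain c where c: "strict_chain c (height_above d')" "c 0 = d'"
    using height_above_chain[OF H] by blast
  define c' where "c' = (\<lambda>i. case i of 0 \<Rightarrow> d | Suc j \<Rightarrow> c j)"
  have "strict_chain c' (Suc (height_above d'))"
    using c less by (auto simp: strict_chain_def c'_def split: nat.split)
  moreover have "c' 0 = d" by (simp add: c'_def)
  ultimately have "Suc (height_above d') \<le> height_above d"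
    unfolding height_above_def
    by (intro Greatest_le_nat[where b = h]) (use H strict_chain_le_height in blast)+
  then show ?thesis by simp
qed

lemma wf_greater_of_height:
  "has_height TYPE('d::order) h \<Longrightarrow> wf {(y, x). x < (y::'d)}"
  by (rule wf_subset[OF wf_measure[of height_above]]) (auto intro: height_above_less)

lemma wf_widening_steps:
  assumes "widening w"
  shows "wf {(w a b, a) | a b. w a b \<noteq> a}"
  unfolding wf_iff_no_infinite_down_chain
proof
  assume "\<exists>g. \<forall>i. (g (Suc i), g i) \<in> {(w a b, a) | a b. w a b \<noteq> a}"
  then obtain g B where "\<forall>i. g (Suc i) = w (g i) (B i) \<and> g (Suc i) \<noteq> g i"
    by simp metis
  then show False using assms unfolding widening_def by blast
qed

lemma wf_narrowing_steps:
  assumes "narrowing nr"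
  shows "wf {(nr a b, a) | a b. b \<le> a \<and> nr a b \<noteq> a}"
  unfolding wf_iff_no_infinite_down_chain
proof
  assume "\<exists>g. \<forall>i. (g (Suc i), g i) \<in> {(nr a b, a) | a b. b \<le> a \<and> nr a b \<noteq> a}"
  then obtain g B where "\<forall>i. B i \<le> g i \<and> g (Suc i) = nr (g i) (B i) \<and> g (Suc i) \<noteq> g i"
    by simp metis
  then show False using assms unfolding narrowing_def by blast
qed

lemma boxdot_fixed_imp_le:
  "widening w \<Longrightarrow> \<forall>a b. boxdot w nr a b = a \<longrightarrow> b \<le> a"
  unfolding widening_def boxdot_def by (metis)

lemma boxdot_between:
  "narrowing nr \<Longrightarrow> \<forall>a b. b \<le> a \<longrightarrow> b \<le> boxdot w nr a b \<and> boxdot w nr a b \<le> a"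
  unfolding narrowing_def boxdot_def by simp

lemma upper_bound_op_fixed_imp_le:
  "upper_bound_op join \<Longrightarrow> \<forall>a b. join a b = a \<longrightarrow> b \<le> a"
  unfolding upper_bound_op_def by metis

lemma srr_unchanged:
  "srr box f i \<rho> \<rho>' k \<Longrightarrow> j = 0 \<or> i < j \<Longrightarrow> \<rho>' j = \<rho> j"
  by (induction rule: srr.induct) auto

lemma srr_post_solution:
  assumes "\<forall>a b. box a b = a \<longrightarrow> b \<le> a"
  shows "srr box f i \<rho> \<rho>' k \<Longrightarrow> post_solution i f \<rho>'"
  unfolding post_solution_def
  by (induction rule: srr.induct) (auto simp: le_Suc_eq assms)

lemma post_solution_update_below:
  assumes post: "post_solution i f \<rho>" and n: "Suc i \<le> n"
    and mono: "\<forall>i\<in>{1..n}. monotonic_rhs n (f i)"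
    and lower: "f (Suc i) \<rho> \<le> c" and upper: "c \<le> \<rho> (Suc i)"
  shows "post_solution (Suc i) f (\<rho>(Suc i := c))"
  unfolding post_solution_def
proof
  fix j assume j: "j \<in> {1..Suc i}"
  have "f j (\<rho>(Suc i := c)) \<le> f j \<rho>"
    using mono j n upper unfolding monotonic_rhs_def by auto
  also have "f j \<rho> \<le> (\<rho>(Suc i := c)) j"
    using post lower j by (cases "j = Suc i") (auto simp: post_solution_def)
  finally show "f j (\<rho>(Suc i := c)) \<le> (\<rho>(Suc i := c)) j" .
qed

lemma srr_descending_from_post_solution:
  assumes fixed: "\<forall>a b. box a b = a \<longrightarrow> b \<le> a"
    and between: "\<forall>a b. b \<le> a \<longrightarrow> b \<le> box a b \<and> box a b \<le> a"
    and mono: "\<forall>i\<in>{1..n}. monotonic_rhs n (f i)"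
  shows "srr box f i \<rho> \<rho>' k \<Longrightarrow> i \<le> n \<Longrightarrow> post_solution i f \<rho> \<Longrightarrow> \<rho>' j \<le> \<rho> j"
proof (induction arbitrary: j rule: srr.induct)
  case (zero \<rho>)
  then show ?case by simp
next
  case (stable i \<rho> \<rho>1 k1)
  then show ?case by (simp add: post_solution_def)
next
  case (update i \<rho> \<rho>1 k1 \<rho>2 k2)
  let ?b = "f (Suc i) \<rho>1" and ?new = "box (\<rho>1 (Suc i)) (f (Suc i) \<rho>1)"
  have below: "\<rho>1 l \<le> \<rho> l" for l
    using update.IH(1) update.prems by (simp add: post_solution_def)
  have "?b \<le> f (Suc i) \<rho>"
    using mono update.prems(1) below unfolding monotonic_rhs_def by simp
  also have "\<dots> \<le> \<rho>1 (Suc i)"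
    using update.prems(2) srr_unchanged[OF update.hyps(1)] by (simp add: post_solution_def)
  finally have new: "?b \<le> ?new \<and> ?new \<le> \<rho>1 (Suc i)" using between by blast
  have "post_solution (Suc i) f (\<rho>1(Suc i := ?new))"
    using post_solution_update_below[OF srr_post_solution[OF fixed update.hyps(1)]]
      update.prems(1) mono new by blast
  then have "\<rho>2 j \<le> (\<rho>1(Suc i := ?new)) j"
    using update.IH(2) update.prems(1) by blast
  also have "\<dots> \<le> \<rho> j"
    using new below order_trans by auto
  finally show ?case .
qed

section \<open>Cost of a run with an upper bound operator\<close>

definition potential :: "nat \<Rightarrow> (nat \<Rightarrow> 'd::order) \<Rightarrow> nat" where
  "potential i \<rho> = (\<Sum>j\<in>{1..i}. j * height_above (\<rho> j))"

lemma potential_Suc: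
  "potential (Suc i) \<rho> = potential i \<rho> + Suc i * height_above (\<rho> (Suc i))"
  by (simp add: potential_def)

lemma potential_upd_Suc:
  "potential i (\<rho>(Suc i := d)) = potential i \<rho>"
  unfolding potential_def by (rule sum.cong) auto

lemma potential_le:
  "has_height TYPE('d::order) h \<Longrightarrow> potential i (\<rho> :: nat \<Rightarrow> 'd) \<le> h * (\<Sum>j\<in>{1..i}. j)"
  unfolding potential_def sum_distrib_left
  by (rule sum_mono) (simp add: height_above_le)

text \<open>Each non-stable evaluation of f (i+1) lowers the height above x_(i+1) by at least one
  and thus saves i+1 units of potential, enough for itself and the i evaluations of the
  following pass of solve(i) down to the point where x_(i+1) is evaluated again.\<close>

lemma srr_join_cost:
  assumes H: "has_height TYPE('d::order) h" and J: "upper_bound_op join"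
  shows "srr join f i \<rho> \<rho>' k \<Longrightarrow> k + potential i \<rho>' \<le> i + potential i (\<rho> :: nat \<Rightarrow> 'd)"
proof (induction rule: srr.induct)
  case (zero \<rho>)
  then show ?case by simp
next
  case (stable i \<rho> \<rho>1 k1)
  then show ?case using srr_unchanged[OF stable.hyps(1)] by (simp add: potential_Suc)
next
  case (update i \<rho> \<rho>1 k1 \<rho>2 k2)
  let ?new = "join (\<rho>1 (Suc i)) (f (Suc i) \<rho>1)"
  have "\<rho>1 (Suc i) < ?new"
    using J update.hyps(2) unfolding upper_bound_op_def by (simp add: order_less_le)
  then have "height_above ?new < height_above (\<rho> (Suc i))"
    using height_above_less[OF H] srr_unchanged[OF update.hyps(1)] by simp
  then have "Suc i * Suc (height_above ?new) \<le> Suc i * height_above (\<rho> (Suc i))"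
    by (intro mult_le_mono2) simp
  moreover have "k2 + potential (Suc i) \<rho>2 \<le> Suc i + potential i \<rho>1 + Suc i * height_above ?new"
    using update.IH(2) by (simp only: potential_Suc potential_upd_Suc fun_upd_same)
  ultimately show ?case
    using update.IH(1) by (simp only: potential_Suc mult_Suc_right)
qed

lemma srr_join_evaluations_le:
  assumes H: "has_height TYPE('d::order) h" and J: "upper_bound_op join"
    and run: "srr join f n (\<rho>0 :: nat \<Rightarrow> 'd) \<rho> k"
  shows "real k \<le> real n + real h / 2 * real n * (real n + 1)"
proof -
  have "k \<le> n + h * (\<Sum>j\<in>{1..n}. j)"
    using srr_join_cost[OF H J run] potential_le[OF H, of n \<rho>0] by linarith
  then have "real k \<le> real (n + h * (\<Sum>j\<in>{1..n}. j))"
    by (rule of_nat_mono)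
  also have "\<dots> = real n + real h * (\<Sum>j\<in>{1..n}. real j)"
    by simp
  also have "\<dots> = real n + real h / 2 * real n * (real n + 1)"
    using double_gauss_sum_from_Suc_0[of n, where 'a = real] by simp
  finally show ?thesis .
qed

section \<open>Termination\<close>

text \<open>The first disjunct of the step
  hypothesis hands over to an already established termination result, as needed when
  \<open>\<boxdot>\<close> switches from widening to narrowing.\<close>

lemma srr_Suc_terminates:
  assumes wf: "wf R"
    and inner: "\<And>\<rho>. P \<rho> \<Longrightarrow> \<exists>\<rho>1 k. srr box f i \<rho> \<rho>1 k"
    and step: "\<And>\<rho> \<rho>1 k. P \<rho> \<Longrightarrow> srr box f i \<rho> \<rho>1 k \<Longrightarrow>
        box (\<rho>1 (Suc i)) (f (Suc i) \<rho>1) \<noteq> \<rho>1 (Suc i) \<Longrightarrow>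
        (\<exists>\<rho>' k. srr box f (Suc i) (\<rho>1(Suc i := box (\<rho>1 (Suc i)) (f (Suc i) \<rho>1))) \<rho>' k) \<or>
        (P (\<rho>1(Suc i := box (\<rho>1 (Suc i)) (f (Suc i) \<rho>1))) \<and>
         (box (\<rho>1 (Suc i)) (f (Suc i) \<rho>1), \<rho>1 (Suc i)) \<in> R)"
  shows "P \<rho> \<Longrightarrow> \<exists>\<rho>' k. srr box f (Suc i) \<rho> \<rho>' k"
proof (induction "\<rho> (Suc i)" arbitrary: \<rho> rule: wf_induct_rule[OF wf])
  case less: 1
  obtain \<rho>1 k1 where run: "srr box f i \<rho> \<rho>1 k1"
    using inner[OF less.prems] by blast
  let ?\<rho>2 = "\<rho>1(Suc i := box (\<rho>1 (Suc i)) (f (Suc i) \<rho>1))"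
  show ?case
  proof (cases "box (\<rho>1 (Suc i)) (f (Suc i) \<rho>1) = \<rho>1 (Suc i)")
    case True
    then show ?thesis using srr.stable[OF run] by blast
  next
    case False
    have "\<exists>\<rho>' k. srr box f (Suc i) ?\<rho>2 \<rho>' k"
      using step[OF less.prems run False] less.hyps srr_unchanged[OF run] by auto
    then show ?thesis using srr.update[OF run False] by blast
  qed
qed

lemma srr_join_terminates:
  assumes H: "has_height TYPE('d::order) h" and J: "upper_bound_op join"
  shows "\<exists>\<rho>' k. srr join f i (\<rho> :: nat \<Rightarrow> 'd) \<rho>' k"
proof (induction i arbitrary: \<rho>)
  case 0
  then show ?case using srr.zero by blast
next
  case (Suc i)
  show ?case
  proof (rule srr_Suc_terminates[OF wf_greater_of_height[OF H], where P = "\<lambda>_. True"])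
    fix \<rho>1 :: "nat \<Rightarrow> 'd"
    assume "join (\<rho>1 (Suc i)) (f (Suc i) \<rho>1) \<noteq> \<rho>1 (Suc i)"
    then show "(\<exists>\<rho>' k. srr join f (Suc i) (\<rho>1(Suc i := join (\<rho>1 (Suc i)) (f (Suc i) \<rho>1))) \<rho>' k) \<or>
        True \<and> (join (\<rho>1 (Suc i)) (f (Suc i) \<rho>1), \<rho>1 (Suc i)) \<in> {(y, x). x < y}"
      using J unfolding upper_bound_op_def by (simp add: order_less_le)
  qed (use Suc.IH in blast)+
qed

lemma srr_boxdot_terminates_from_post_solution:
  assumes W: "widening w" and NR: "narrowing nr"
    and mono: "\<forall>i\<in>{1..n}. monotonic_rhs n (f i)"
  shows "i \<le> n \<Longrightarrow> post_solution i f \<rho> \<Longrightarrow> \<exists>\<rho>' k. srr (boxdot w nr) f i \<rho> \<rho>' k"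
proof (induction i arbitrary: \<rho>)
  case 0
  then show ?case using srr.zero by blast
next
  case (Suc i)
  note fixed = boxdot_fixed_imp_le[OF W, where nr = nr]
    and between = boxdot_between[OF NR, where w = w]
  note descending = srr_descending_from_post_solution[OF fixed between mono]
  show ?case
  proof (rule srr_Suc_terminates[OF wf_narrowing_steps[OF NR],
        where P = "post_solution (Suc i) f"])
    fix \<rho> \<rho>1 k
    assume post: "post_solution (Suc i) f \<rho>" and run: "srr (boxdot w nr) f i \<rho> \<rho>1 k"
      and moved: "boxdot w nr (\<rho>1 (Suc i)) (f (Suc i) \<rho>1) \<noteq> \<rho>1 (Suc i)"
    let ?b = "f (Suc i) \<rho>1" and ?new = "boxdot w nr (\<rho>1 (Suc i)) (f (Suc i) \<rho>1)"
    have "\<forall>j\<in>{1..n}. \<rho>1 j \<le> \<rho> j"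
      using descending[OF run] Suc.prems(1) post by (simp add: post_solution_def)
    then have "?b \<le> f (Suc i) \<rho>"
      using mono Suc.prems(1) unfolding monotonic_rhs_def by simp
    also have "\<dots> \<le> \<rho>1 (Suc i)"
      using post srr_unchanged[OF run] by (simp add: post_solution_def)
    finally have b: "?b \<le> \<rho>1 (Suc i)" .
    have "post_solution (Suc i) f (\<rho>1(Suc i := ?new))"
      using post_solution_update_below[OF srr_post_solution[OF fixed run]
          Suc.prems(1) mono] between[rule_format, OF b] by blast
    moreover have "(?new, \<rho>1 (Suc i)) \<in> {(nr a b, a) | a b. b \<le> a \<and> nr a b \<noteq> a}"
      using b moved by (simp add: boxdot_def) blast
    ultimately show "(\<exists>\<rho>' k. srr (boxdot w nr) f (Suc i) (\<rho>1(Suc i := ?new)) \<rho>' k) \<or>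
        post_solution (Suc i) f (\<rho>1(Suc i := ?new)) \<and>
        (?new, \<rho>1 (Suc i)) \<in> {(nr a b, a) | a b. b \<le> a \<and> nr a b \<noteq> a}"
      by blast
  qed (use Suc in \<open>auto simp: post_solution_def\<close>)+
qed

lemma srr_boxdot_terminates:
  assumes W: "widening w" and NR: "narrowing nr"
    and mono: "\<forall>i\<in>{1..n}. monotonic_rhs n (f i)"
  shows "i \<le> n \<Longrightarrow> \<exists>\<rho>' k. srr (boxdot w nr) f i \<rho> \<rho>' k"
proof (induction i arbitrary: \<rho>)
  case 0
  then show ?case using srr.zero by blast
next
  case (Suc i)
  note fixed = boxdot_fixed_imp_le[OF W, where nr = nr]
    and between = boxdot_between[OF NR, where w = w]
  show ?case
  proof (rule srr_Suc_terminates[OF wf_widening_steps[OF W], where P = "\<lambda>_. True"])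
    fix \<rho> \<rho>1 k
    assume run: "srr (boxdot w nr) f i \<rho> \<rho>1 k"
      and moved: "boxdot w nr (\<rho>1 (Suc i)) (f (Suc i) \<rho>1) \<noteq> \<rho>1 (Suc i)"
    let ?b = "f (Suc i) \<rho>1" and ?new = "boxdot w nr (\<rho>1 (Suc i)) (f (Suc i) \<rho>1)"
    show "(\<exists>\<rho>' k. srr (boxdot w nr) f (Suc i) (\<rho>1(Suc i := ?new)) \<rho>' k) \<or>
        True \<and> (?new, \<rho>1 (Suc i)) \<in> {(w a b, a) | a b. w a b \<noteq> a}"
    proof (cases "?b \<le> \<rho>1 (Suc i)")
      case True
      have "post_solution (Suc i) f (\<rho>1(Suc i := ?new))"
        using post_solution_update_below[OF srr_post_solution[OF fixed run]
            Suc.prems mono] between[rule_format, OF True] by blast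
      then show ?thesis
        using srr_boxdot_terminates_from_post_solution[OF W NR mono Suc.prems] by blast
    next
      case False
      then show ?thesis using moved by (simp add: boxdot_def) blast
    qed
  qed (use Suc in auto)
qed

theorem mainTheorem4:
  fixes n :: nat and f :: "nat \<Rightarrow> (nat \<Rightarrow> 'd::order) \<Rightarrow> 'd" and \<rho>0 :: "nat \<Rightarrow> 'd"
  assumes dir: "directed_set TYPE('d)"
    and mono: "\<forall>i\<in>{1..n}. monotonic_rhs n (f i)"
  shows "(\<forall>h join. has_height TYPE('d) h \<and> upper_bound_op join \<longrightarrow>
            (\<exists>\<rho> k. srr join f n \<rho>0 \<rho> k \<and> post_solution n f \<rho> \<and>
                   real k \<le> real n + real h / 2 * real n * (real n + 1)))
       \<and> (\<forall>w nr. widening w \<and> narrowing nr \<longrightarrow>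
            (\<exists>\<rho> k. srr (boxdot w nr) f n \<rho>0 \<rho> k \<and> post_solution n f \<rho>))"
proof (intro conjI allI impI; elim conjE)
  fix h and join :: "'d \<Rightarrow> 'd \<Rightarrow> 'd"
  assume H: "has_height TYPE('d) h" and J: "upper_bound_op join"
  obtain \<rho> k where run: "srr join f n \<rho>0 \<rho> k"
    using srr_join_terminates[OF H J] by blast
  then show "\<exists>\<rho> k. srr join f n \<rho>0 \<rho> k \<and> post_solution n f \<rho> \<and>
                   real k \<le> real n + real h / 2 * real n * (real n + 1)"
    using srr_post_solution[OF upper_bound_op_fixed_imp_le[OF J]] srr_join_evaluations_le[OF H J]
    by blast
next
  fix w nr :: "'d \<Rightarrow> 'd \<Rightarrow> 'd"
  assume W: "widening w" and NR: "narrowing nr"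
  obtain \<rho> k where run: "srr (boxdot w nr) f n \<rho>0 \<rho> k"
    using srr_boxdot_terminates[OF W NR mono] by blast
  then show "\<exists>\<rho> k. srr (boxdot w nr) f n \<rho>0 \<rho> k \<and> post_solution n f \<rho>"
    using srr_post_solution[OF boxdot_fixed_imp_le[OF W]] by blast
qed

end
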